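(* Suppose Assumption A (constant $d$) and Assumption E hold, and let $\epsilon_\theta\in(0,1)$ be such that $m^\circ_\epsilon\le G_\epsilon$ for all $\epsilon\in(0,\epsilon_\theta)$. Then for all $\epsilon\in(0,\epsilon_\theta)$: (i) $\sum_{j=1}^{G_\epsilon}\sigma_j^2\lambda_j^2\epsilon^{-2}\,\mathbb E_{\theta^\circ}\big\{(Y_j-\lambda_j\theta^\circ_j)P_{M|Y}(j\le M\le G_\epsilon)\big\}^2\le\epsilon\,m^+_\epsilon\bar\Lambda_{m^+_\epsilon}+10\Lambda_1\exp\big(-m^\circ_\epsilon/5+2\log G_\epsilon\big)$; (ii) $\sum_{j=1}^{G_\epsilon}(\eta_j-\theta^\circ_j)^2\,\mathbb E_{\theta^\circ}\big[P_{M|Y}(1\le M<j)+(\sigma_j/\tau_j)^2P_{M|Y}(j\le M\le G_\epsilon)\big]+\sum_{j>G_\epsilon}(\eta_j-\theta^\circ_j)^2\le b_{m^-_\epsilon}+\|\eta-\theta^\circ\|^2\big\{d^{-2}\epsilon\Lambda_{(m^-_\epsilon)}+2\exp\big(-m^\circ_\epsilon/5+\log G_\epsilon\big)\big\}$.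
   Context: Let $\ell^2$ be the space of square-summable real sequences with norm $\|\cdot\|$. Fix a bounded real sequence $\lambda=(\lambda_j)_{j\ge1}$ with $\lambda_j\ne0$ for all $j$, a noise level $\epsilon\in(0,1)$ and a true parameter $\theta^\circ\in\ell^2$. The data $Y=(Y_j)_{j\ge1}$ satisfy $Y_j=\lambda_j\theta^\circ_j+\sqrt\epsilon\,\xi_j$ with $\xi_j$ i.i.d. $N(0,1)$; $\mathbb E_{\theta^\circ}$ denotes expectation under this law. Fix prior means $\eta=(\eta_j)_{j\ge1}$ with $\theta^\circ-\eta\in\ell^2$ and prior variances $\tau_j\in(0,\infty)$ (possibly depending on $\epsilon$). Put $\sigma_j:=(\lambda_j^2\epsilon^{-1}+\tau_j^{-1})^{-1}$, $\theta^Y_j:=\sigma_j(\tau_j^{-1}\eta_j+\lambda_j\epsilon^{-1}Y_j)$, $\hat\theta^m_j:=\theta^Y_j$ for $j\le m$, $\hat\theta^m_j:=\eta_j$ for $j>m$. Define $b_m:=\sum_{j>m}(\theta^\circ_j-\eta_j)^2$, $\Lambda_j:=\lambda_j^{-2}$, $\Lambda_{(m)}:=\max_{1\le j\le m}\Lambda_j$, $\bar\Lambda_m:=m^{-1}\sum_{j=1}^m\Lambda_j$, $\Phi^m_\epsilon:=b_m\vee\epsilon m\bar\Lambda_m$, $m^\circ_\epsilon:=\min\{m\ge1:\Phi^m_\epsilon\le\Phi^k_\epsilon\ \forall k\ge1\}$, $\Phi^\circ_\epsilon:=\min_{m\ge1}\Phi^m_\epsilon$. Let $G_\epsilon:=\max\{1\le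 m\le\lfloor\epsilon^{-1}\rfloor:\epsilon\Lambda_{(m)}\le\Lambda_1\}$. Assumption A: there is $d>0$ with $\tau_j\ge d\,(\epsilon^{1/2}\Lambda_j^{1/2}\vee\epsilon\Lambda_j)$ for all $1\le j\le G_\epsilon$, $\epsilon\in(0,1)$. Assumption E: there are constants $C_\lambda\ge1$, $L_\lambda\ge1$ such that for all $k,l\in\mathbb N$: (i) $\sup_{j>k}\lambda_j^2\le C_\lambda\min_{1\le j\le k}\lambda_j^2=C_\lambda\Lambda_{(k)}^{-1}$; (ii) $\Lambda_{(kl)}\le\Lambda_{(k)}\Lambda_{(l)}$; (iii) $\Lambda_{(k)}/\bar\Lambda_k\le L_\lambda$. Hierarchical prior: a random dimension $M$ with values in $\{1,\dots,G_\epsilon\}$ and $P(M=m)\propto\exp(-3C_\lambda m/2)\prod_{j=1}^m(\tau_j/\sigma_j)^{1/2}$; conditionally on $M=m$ the parameter $\vartheta^M$ has independent coordinates $N(\eta_j,\tau_j)$ for $j\le m$ and equal to $\eta_j$ for $j>m$, and $Y_j=\lambda_j\vartheta^M_j+\sqrt\epsilon\xi_j$. The posterior of $M$ is $P_{M|Y}(M=m)=\exp(\frac12\{\|\hat\theta^m-\eta\|_\sigma^2-3C_\lambda m\})/\sum_{k=1}^{G_\epsilon}\exp(\frac12\{\|\hat\theta^k-\eta\|_\sigma^2-3C_\lambda k\})$ with $\|x\|_\sigma^2:=\sum_j x_j^2/\sigma_j$. Finally $m^-_\epsilon:=\min\{m\in\{1,\dots,m^\circ_\epsilon\}:b_m\le8L_\lambda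 C_\lambda(1+1/d)\Phi^\circ_\epsilon\}$ and $m^+_\epsilon:=\max\{m\in\{m^\circ_\epsilon,\dots,G_\epsilon\}:m\le5L_\lambda(\epsilon\Lambda_{(m^\circ_\epsilon)})^{-1}\Phi^\circ_\epsilon\}$. *)

theory Defs
  imports "HOL-Probability.Probability"
begin

text \<open>Sequences are functions nat => real; only indices j >= 1 are used.
  The noise level eps is a real in (0,1); prior variances tau may depend on eps,
  hence tau :: real => nat => real.\<close>

definition sig :: "(nat \<Rightarrow> real) \<Rightarrow> (real \<Rightarrow> nat \<Rightarrow> real) \<Rightarrow> real \<Rightarrow> nat \<Rightarrow> real" where
  "sig lam tau eps j = 1 / ((lam j)\<^sup>2 / eps + 1 / tau eps j)"

definition thetaY :: "(nat \<Rightarrow> real) \<Rightarrow> (real \<Rightarrow> nat \<Rightarrow> real) \<Rightarrow> (nat \<Rightarrow> real) \<Rightarrow> real \<Rightarrow> (nat \<Rightarrow> real) \<Rightarrow> nat \<Rightarrow> real" where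
  "thetaY lam tau eta eps Y j = sig lam tau eps j * (eta j / tau eps j + lam j * Y j / eps)"

definition Lam :: "(nat \<Rightarrow> real) \<Rightarrow> nat \<Rightarrow> real" where
  "Lam lam j = 1 / (lam j)\<^sup>2"

definition Lmax :: "(nat \<Rightarrow> real) \<Rightarrow> nat \<Rightarrow> real" where
  "Lmax lam m = Max (Lam lam ` {1..m})"

definition Lbar :: "(nat \<Rightarrow> real) \<Rightarrow> nat \<Rightarrow> real" where
  "Lbar lam m = (\<Sum>j=1..m. Lam lam j) / real m"

definition bias :: "(nat \<Rightarrow> real) \<Rightarrow> (nat \<Rightarrow> real) \<Rightarrow> nat \<Rightarrow> real" where
  "bias th eta m = (\<Sum>\<^sub>\<infinity> j\<in>{m<..}. (th j - eta j)\<^sup>2)"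

definition Phi :: "(nat \<Rightarrow> real) \<Rightarrow> (nat \<Rightarrow> real) \<Rightarrow> (nat \<Rightarrow> real) \<Rightarrow> real \<Rightarrow> nat \<Rightarrow> real" where
  "Phi lam th eta eps m = max (bias th eta m) (eps * real m * Lbar lam m)"

definition mcirc :: "(nat \<Rightarrow> real) \<Rightarrow> (nat \<Rightarrow> real) \<Rightarrow> (nat \<Rightarrow> real) \<Rightarrow> real \<Rightarrow> nat" where
  "mcirc lam th eta eps =
     (LEAST m. 1 \<le> m \<and> (\<forall>k\<ge>1. Phi lam th eta eps m \<le> Phi lam th eta eps k))"

definition Phicirc :: "(nat \<Rightarrow> real) \<Rightarrow> (nat \<Rightarrow> real) \<Rightarrow> (nat \<Rightarrow> real) \<Rightarrow> real \<Rightarrow> real" where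
  "Phicirc lam th eta eps = (INF m\<in>{1..}. Phi lam th eta eps m)"

definition Gdim :: "(nat \<Rightarrow> real) \<Rightarrow> real \<Rightarrow> nat" where
  "Gdim lam eps = Max {m \<in> {1..nat \<lfloor>1 / eps\<rfloor>}. eps * Lmax lam m \<le> Lam lam 1}"

definition assumptionA :: "(nat \<Rightarrow> real) \<Rightarrow> (real \<Rightarrow> nat \<Rightarrow> real) \<Rightarrow> real \<Rightarrow> bool" where
  "assumptionA lam tau d \<longleftrightarrow> d > 0 \<and>
     (\<forall>eps. 0 < eps \<and> eps < 1 \<longrightarrow> (\<forall>j\<in>{1..Gdim lam eps}.
        tau eps j \<ge> d * max (sqrt eps * sqrt (Lam lam j)) (eps * Lam lam j)))"

definition assumptionE :: "(nat \<Rightarrow> real) \<Rightarrow> real \<Rightarrow> real \<Rightarrow> bool" where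
  "assumptionE lam C L \<longleftrightarrow> C \<ge> 1 \<and> L \<ge> 1 \<and>
     (\<forall>k\<ge>1. \<forall>l\<ge>1.
        (SUP j\<in>{k<..}. (lam j)\<^sup>2) \<le> C * (MIN j\<in>{1..k}. (lam j)\<^sup>2) \<and>
        Lmax lam (k * l) \<le> Lmax lam k * Lmax lam l \<and>
        Lmax lam k / Lbar lam k \<le> L)"

text \<open>Unnormalised posterior weight of M = k:
  exp((||thetahat^k - eta||_sigma^2 - 3 C k)/2); coordinates j > k of thetahat^k - eta vanish.\<close>
definition postw :: "(nat \<Rightarrow> real) \<Rightarrow> (real \<Rightarrow> nat \<Rightarrow> real) \<Rightarrow> (nat \<Rightarrow> real) \<Rightarrow> real \<Rightarrow> real \<Rightarrow> (nat \<Rightarrow> real) \<Rightarrow> nat \<Rightarrow> real" where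
  "postw lam tau eta C eps Y k =
     exp ((\<Sum>j=1..k. (thetaY lam tau eta eps Y j - eta j)\<^sup>2 / sig lam tau eps j) / 2 - 3 * C * real k / 2)"

definition postM :: "(nat \<Rightarrow> real) \<Rightarrow> (real \<Rightarrow> nat \<Rightarrow> real) \<Rightarrow> (nat \<Rightarrow> real) \<Rightarrow> real \<Rightarrow> real \<Rightarrow> (nat \<Rightarrow> real) \<Rightarrow> nat \<Rightarrow> real" where
  "postM lam tau eta C eps Y m =
     postw lam tau eta C eps Y m / (\<Sum>k=1..Gdim lam eps. postw lam tau eta C eps Y k)"

definition noise :: "(nat \<Rightarrow> real) measure" where
  "noise = (\<Pi>\<^sub>M j\<in>UNIV. density lborel std_normal_density)"

definition obs :: "(nat \<Rightarrow> real) \<Rightarrow> (nat \<Rightarrow> real) \<Rightarrow> real \<Rightarrow> (nat \<Rightarrow> real) \<Rightarrow> nat \<Rightarrow> real" where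
  "obs lam th eps xi j = lam j * th j + sqrt eps * xi j"

definition mminus :: "(nat \<Rightarrow> real) \<Rightarrow> (nat \<Rightarrow> real) \<Rightarrow> (nat \<Rightarrow> real) \<Rightarrow> real \<Rightarrow> real \<Rightarrow> real \<Rightarrow> real \<Rightarrow> nat" where
  "mminus lam th eta C L d eps =
     Min {m \<in> {1..mcirc lam th eta eps}. bias th eta m \<le> 8 * L * C * (1 + 1 / d) * Phicirc lam th eta eps}"

definition mplus :: "(nat \<Rightarrow> real) \<Rightarrow> (nat \<Rightarrow> real) \<Rightarrow> (nat \<Rightarrow> real) \<Rightarrow> real \<Rightarrow> real \<Rightarrow> nat" where
  "mplus lam th eta L eps =
     Max {m \<in> {mcirc lam th eta eps..Gdim lam eps}.
            real m \<le> 5 * L * Phicirc lam th eta eps / (eps * Lmax lam (mcirc lam th eta eps))}"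

end

theory Submission
  imports Defs
begin

(*
  The posterior weight of a dimension m is bounded by exp (s (W m - W m\<^sub>o)) for every s \<in> (0,1],
  where W is the log-weight of the dimension posterior and m\<^sub>o the oracle dimension. Under the
  data law W m - W m\<^sub>o is a sum of independent shifted squares of standard normals, so the expected
  bound factorises into Gaussian moment generating functions, which are explicit. Assumptions A
  and E, together with the choice of m\<^sup>- and m\<^sup>+, make the resulting exponent at most -m\<^sub>o/5:
  below m\<^sup>- the signal missed by the smaller model outweighs the dimension penalty (s = 1), above
  m\<^sup>+ the dimension penalty dominates (s = 1/4). Part (ii) splits the coordinates at m\<^sup>- and
  part (i) at m\<^sup>+: on one side these tail bounds make the contribution exponentially small, on
  the other it is bounded trivially, by the bias b m\<^sup>- in (ii) and by eps \<Sum>\<^bsub>j\<le>m\<^sup>+\<^esub> Lam j in (i).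
*)

section \<open>Gaussian integrals\<close>

abbreviation std_normal :: "real measure" where
  "std_normal \<equiv> density lborel std_normal_density"

interpretation std_normal: prob_space std_normal
  by (rule prob_space_normal_density) simp

lemma std_normal_density_mult_exp_quadratic:
  fixes a b x :: real
  assumes "a < 1/2"
  defines "k \<equiv> 1 - 2*a"
  shows "std_normal_density x * exp (a*x\<^sup>2 + b*x) =
     exp (b\<^sup>2 / (2*k)) / sqrt k * normal_density (b/k) (1 / sqrt k) x"
proof -
  have k: "k > 0" using assms by (simp add: k_def)
  have q: "(x - b/k)\<^sup>2 * k = k*x\<^sup>2 - 2*b*x + b\<^sup>2/k"
    using k by (simp add: power2_eq_square field_simps)
  have sq: "(1 / sqrt k)\<^sup>2 = 1/k"
    using k by (simp add: power_divide)
  have square: "- x\<^sup>2 / 2 + (a*x\<^sup>2 + b*x) = b\<^sup>2/(2*k) + (-(x - b/k)\<^sup>2 / (2 * (1/sqrt k)\<^sup>2))"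
    unfolding sq using k q by (simp add: k_def field_simps)
  have sqrt: "sqrt (2 * pi * (1 / sqrt k)\<^sup>2) = sqrt (2*pi) / sqrt k"
    using k by (simp add: real_sqrt_divide real_sqrt_mult power_divide)
  have "std_normal_density x * exp (a*x\<^sup>2 + b*x) = 1 / sqrt (2 * pi) * exp (- x\<^sup>2 / 2 + (a*x\<^sup>2 + b*x))"
    by (subst exp_add) (simp add: std_normal_density_def)
  also have "\<dots> = exp (b\<^sup>2 / (2*k)) / sqrt k * normal_density (b/k) (1 / sqrt k) x"
    unfolding square normal_density_def sqrt exp_add using k by (simp add: field_simps)
  finally show ?thesis .
qed

lemma nn_integral_std_normal_exp_quadratic:
  fixes a b :: real
  assumes "a < 1/2"
  shows "(\<integral>\<^sup>+x. exp (a*x\<^sup>2 + b*x) \<partial>std_normal) = exp (b\<^sup>2 / (2*(1-2*a))) / sqrt (1-2*a)"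
proof -
  have k: "1 - 2*a > 0" using assms by simp
  have "(\<integral>\<^sup>+x. exp (a*x\<^sup>2 + b*x) \<partial>std_normal)
      = (\<integral>\<^sup>+x. ennreal (exp (b\<^sup>2 / (2*(1-2*a))) / sqrt (1-2*a))
               * ennreal (normal_density (b/(1-2*a)) (1 / sqrt (1-2*a)) x) \<partial>lborel)"
    using std_normal_density_mult_exp_quadratic[OF assms] k
    by (subst nn_integral_density) (auto simp: ennreal_mult'[symmetric] intro!: nn_integral_cong)
  also have "\<dots> = exp (b\<^sup>2 / (2*(1-2*a))) / sqrt (1-2*a)"
    using k by (subst nn_integral_cmult) (auto simp: nn_integral_eq_integral)
  finally show ?thesis .
qed

lemma nn_integral_std_normal_exp_shifted_square:
  fixes a u :: real
  assumes a: "a < 1/2"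
  shows "(\<integral>\<^sup>+x. exp (a*(u+x)\<^sup>2) \<partial>std_normal) = exp (a*u\<^sup>2 / (1-2*a)) / sqrt (1-2*a)"
proof -
  have k: "1 - 2*a > 0" using a by simp
  have expand: "exp (a*(u+x)\<^sup>2) = exp (a*u\<^sup>2) * exp (a*x\<^sup>2 + (2*a*u)*x)" for x
    by (simp add: exp_add[symmetric] power2_eq_square algebra_simps)
  have exponent: "a*u\<^sup>2 + (2*a*u)\<^sup>2 / (2*(1-2*a)) = a*u\<^sup>2 / (1-2*a)"
    using k by (simp add: power2_eq_square field_simps)
  have "(\<integral>\<^sup>+x. exp (a*(u+x)\<^sup>2) \<partial>std_normal)
      = ennreal (exp (a*u\<^sup>2)) * (\<integral>\<^sup>+x. exp (a*x\<^sup>2 + (2*a*u)*x) \<partial>std_normal)"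
    unfolding expand by (subst nn_integral_cmult[symmetric]) (auto simp: ennreal_mult)
  also have "\<dots> = exp (a*u\<^sup>2) * (exp ((2*a*u)\<^sup>2 / (2*(1-2*a))) / sqrt (1-2*a))"
    using a by (simp add: nn_integral_std_normal_exp_quadratic ennreal_mult[symmetric])
  also have "\<dots> = exp (a*u\<^sup>2 / (1-2*a)) / sqrt (1-2*a)"
    by (simp add: exponent[symmetric] exp_add)
  finally show ?thesis .
qed

lemma nn_integral_std_normal_exp_neg_shifted_square_le:
  fixes r u :: real
  assumes "0 \<le> r" "r \<le> 1"
  shows "(\<integral>\<^sup>+x. exp (-(r/2)*(u+x)\<^sup>2) \<partial>std_normal) \<le> exp (-r*u\<^sup>2/4)"
proof -
  have "r*(r*u\<^sup>2) \<le> r*u\<^sup>2"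
    using assms by (simp add: mult_left_le_one_le)
  then have "r*u\<^sup>2/4 \<le> (r/2)*u\<^sup>2 / (1+r)"
    using assms by (simp add: field_simps)
  then have "exp (-(r/2)*u\<^sup>2 / (1+r)) \<le> exp (-r*u\<^sup>2/4)"
    by simp
  moreover have "exp (-(r/2)*u\<^sup>2 / (1+r)) / sqrt (1+r) \<le> exp (-(r/2)*u\<^sup>2 / (1+r))"
    using assms by (simp add: divide_le_eq)
  ultimately have "exp (-(r/2)*u\<^sup>2 / (1+r)) / sqrt (1+r) \<le> exp (-r*u\<^sup>2/4)"
    by linarith
  then show ?thesis
    using nn_integral_std_normal_exp_shifted_square[of "-(r/2)" u] assms
    by (simp add: ennreal_leI)
qed

lemma nn_integral_std_normal_exp_shifted_square_le:
  fixes r u :: real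
  assumes "0 \<le> r" "r \<le> 1"
  shows "(\<integral>\<^sup>+x. exp ((r/8)*(u+x)\<^sup>2) \<partial>std_normal) \<le> exp (1/5) * exp (u\<^sup>2/4)"
proof -
  have k: "3/4 \<le> 1 - r/4" using assms by simp
  have "(r/8)*u\<^sup>2 / (1 - r/4) \<le> (1/8)*u\<^sup>2 / (3/4)"
    using assms k by (intro frac_le mult_right_mono) auto
  also have "\<dots> \<le> u\<^sup>2/4" by simp
  finally have exponent: "exp ((r/8)*u\<^sup>2 / (1 - r/4)) \<le> exp (u\<^sup>2/4)"
    by simp
  have "1 \<le> exp (1/5) * sqrt (3/4::real)"
  proof (rule power2_le_imp_le)
    have "exp (1/5::real) ^ 2 = exp (2/5)"
      by (simp add: power2_eq_square exp_add[symmetric])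
    then have "(exp (1/5) * sqrt (3/4::real))\<^sup>2 = exp (2/5) * (3/4)"
      by (simp add: power_mult_distrib)
    moreover have "1 + 2/5 \<le> exp (2/5::real)" by (rule exp_ge_add_one_self)
    ultimately show "1\<^sup>2 \<le> (exp (1/5) * sqrt (3/4::real))\<^sup>2" by simp
  qed simp
  also have "\<dots> \<le> exp (1/5) * sqrt (1 - r/4)" using k by simp
  finally have root: "1 \<le> exp (1/5) * sqrt (1 - r/4)" .
  have "exp ((r/8)*u\<^sup>2 / (1 - r/4)) / sqrt (1 - r/4) \<le> exp (u\<^sup>2/4) / sqrt (1 - r/4)"
    using exponent k by (intro divide_right_mono) auto
  also have "\<dots> \<le> exp (u\<^sup>2/4) * exp (1/5)"
    using root k by (simp add: divide_le_eq mult.assoc)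
  finally have "exp ((r/8)*u\<^sup>2 / (1 - r/4)) / sqrt (1 - r/4) \<le> exp (1/5) * exp (u\<^sup>2/4)"
    by (simp add: mult.commute)
  then show ?thesis
    using nn_integral_std_normal_exp_shifted_square[of "r/8" u] assms
    by (simp add: ennreal_leI)
qed

lemma sq_le_three_exp_sq_div_eight: "(x::real)\<^sup>2 \<le> 3 * exp (x\<^sup>2/8)"
proof -
  have "1 + (x\<^sup>2/8 - 1) \<le> exp (x\<^sup>2/8 - 1)" by (rule exp_ge_add_one_self)
  also have "\<dots> = exp (x\<^sup>2/8) / exp 1" by (simp add: exp_diff)
  finally have "x\<^sup>2/8 * exp 1 \<le> exp (x\<^sup>2/8)" by (simp add: le_divide_eq)
  moreover have "8/3 \<le> exp (1::real)"
    using abs_le_D2[OF e_approx_32] by simp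
  then have "x\<^sup>2 * (8/3) \<le> x\<^sup>2 * exp 1" by (intro mult_left_mono) auto
  ultimately show ?thesis by simp
qed

lemma sq_mult_exp_shifted_square_le:
  fixes r u x :: real
  shows "x\<^sup>2 * exp ((r/8)*(u+x)\<^sup>2) \<le> 3 * exp (r*u\<^sup>2/8) * exp (((1+r)/8)*x\<^sup>2 + (r*u/4)*x)"
proof -
  have "x\<^sup>2 * exp ((r/8)*(u+x)\<^sup>2) \<le> 3 * exp (x\<^sup>2/8) * exp ((r/8)*(u+x)\<^sup>2)"
    using sq_le_three_exp_sq_div_eight[of x] by (intro mult_right_mono) auto
  also have "\<dots> = 3 * exp (r*u\<^sup>2/8) * exp (((1+r)/8)*x\<^sup>2 + (r*u/4)*x)"
    by (simp add: mult.assoc exp_add[symmetric] power2_eq_square algebra_simps)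
  finally show ?thesis .
qed

lemma nn_integral_std_normal_sq_mult_exp_shifted_square_le:
  fixes r u :: real
  assumes r: "0 \<le> r" "r \<le> 1"
  shows "(\<integral>\<^sup>+x. x\<^sup>2 * exp ((r/8)*(u+x)\<^sup>2) \<partial>std_normal) \<le> 5 * exp (u\<^sup>2/4)"
proof -
  have "(\<integral>\<^sup>+x. x\<^sup>2 * exp ((r/8)*(u+x)\<^sup>2) \<partial>std_normal)
      \<le> (\<integral>\<^sup>+x. ennreal (3 * exp (r*u\<^sup>2/8)) * ennreal (exp (((1+r)/8)*x\<^sup>2 + (r*u/4)*x)) \<partial>std_normal)"
    using sq_mult_exp_shifted_square_le[of _ r u]
    by (intro nn_integral_mono) (auto simp: ennreal_mult[symmetric] intro!: ennreal_leI)
  also have "\<dots> = ennreal (3 * exp (r*u\<^sup>2/8)) * (\<integral>\<^sup>+x. exp (((1+r)/8)*x\<^sup>2 + (r*u/4)*x) \<partial>std_normal)"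
    by (subst nn_integral_cmult) auto
  also have "\<dots> = ennreal (3 * exp (r*u\<^sup>2/8) * (exp ((r*u/4)\<^sup>2 / (2*(1-2*((1+r)/8)))) / sqrt (1-2*((1+r)/8))))"
    using r by (subst nn_integral_std_normal_exp_quadratic) (auto simp: ennreal_mult[symmetric])
  also have "\<dots> \<le> 5 * exp (u\<^sup>2/4)"
  proof (rule ennreal_leI)
    have k: "1-2*((1+r)/8) = 1 - (1+r)/4" by simp
    have k1: "1/2 \<le> 1 - (1+r)/4" using r by simp
    have "(r*u/4)\<^sup>2 \<le> u\<^sup>2/16" using r
      by (simp add: power_mult_distrib power_divide)
        (metis mult_left_le_one_le power_le_one zero_le_power2 mult.commute)
    then have "(r*u/4)\<^sup>2 / (2*(1 - (1+r)/4)) \<le> (u\<^sup>2/16) / 1"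
      using k1 by (intro frac_le) auto
    moreover have "r*u\<^sup>2/8 \<le> u\<^sup>2/8" using r by (simp add: mult_left_le_one_le)
    ultimately have exponent: "r*u\<^sup>2/8 + (r*u/4)\<^sup>2 / (2*(1 - (1+r)/4)) \<le> u\<^sup>2/4"
      using zero_le_power2[of u] by linarith
    have "1 \<le> (5/3) * sqrt (1/2::real)"
    proof (rule power2_le_imp_le)
      have "((5/3) * sqrt (1/2::real))\<^sup>2 = 25/18"
        unfolding power_mult_distrib by (simp add: power2_eq_square)
      then show "1\<^sup>2 \<le> ((5/3) * sqrt (1/2::real))\<^sup>2" by simp
    qed simp
    also have "\<dots> \<le> (5/3) * sqrt (1 - (1+r)/4)" using k1 by simp
    finally have root: "1 \<le> (5/3) * sqrt (1 - (1+r)/4)" .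
    have "3 * exp (r*u\<^sup>2/8) * (exp ((r*u/4)\<^sup>2 / (2*(1 - (1+r)/4))) / sqrt (1 - (1+r)/4))
        = 3 * (exp (r*u\<^sup>2/8 + (r*u/4)\<^sup>2 / (2*(1 - (1+r)/4))) / sqrt (1 - (1+r)/4))"
      by (simp add: exp_add)
    also have "\<dots> \<le> 3 * (exp (u\<^sup>2/4) / sqrt (1 - (1+r)/4))"
      using exponent k1 by (intro mult_left_mono divide_right_mono) auto
    also have "\<dots> \<le> 3 * (exp (u\<^sup>2/4) * (5/3))"
      using root k1 by (intro mult_left_mono)
        (auto simp: divide_le_eq mult.assoc mult.commute[of "5/3"] intro: mult_left_mono[of 1, simplified])
    finally show "3 * exp (r*u\<^sup>2/8) * (exp ((r*u/4)\<^sup>2 / (2*(1-2*((1+r)/8)))) / sqrt (1-2*((1+r)/8)))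
        \<le> 5 * exp (u\<^sup>2/4)"
      unfolding k by simp
  qed
  finally show ?thesis .
qed

lemma nn_integral_std_normal_sq: "(\<integral>\<^sup>+x. x\<^sup>2 \<partial>std_normal) = 1"
proof -
  have "(\<integral>\<^sup>+x. x\<^sup>2 \<partial>std_normal) = (\<integral>\<^sup>+x. ennreal (std_normal_density x * x^(2*1)) \<partial>lborel)"
    by (subst nn_integral_density) (auto simp: ennreal_mult[symmetric])
  also have "\<dots> = ennreal (fact (2 * 1) / (2^1 * fact 1))"
    using integral_std_normal_moment_even[of 1]
    by (subst nn_integral_eq_integral) (auto intro: integrable_std_normal_moment)
  finally show ?thesis by simp
qed

lemma prod_mono_ennreal:
  fixes f g :: "'a \<Rightarrow> ennreal"
  shows "(\<And>i. i \<in> A \<Longrightarrow> f i \<le> g i) \<Longrightarrow> prod f A \<le> prod g A"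
  by (induction A rule: infinite_finite_induct) (auto intro!: mult_mono)

interpretation noise_factors: product_prob_space "\<lambda>_::nat. std_normal" UNIV
  by unfold_locales

interpretation noise: prob_space noise
  unfolding noise_def by (rule prob_space_PiM) (rule prob_space_normal_density, simp)

lemma nn_integral_noise_prod:
  assumes "finite J" "\<And>i. i \<in> J \<Longrightarrow> f i \<in> borel_measurable borel"
  shows "(\<integral>\<^sup>+xi. (\<Prod>i\<in>J. f i (xi i)) \<partial>noise) = (\<Prod>i\<in>J. \<integral>\<^sup>+x. f i x \<partial>std_normal)"
proof -
  have "(\<integral>\<^sup>+xi. (\<Prod>i\<in>J. f i (xi i)) \<partial>noise) = (\<integral>\<^sup>+xi. (\<Prod>i\<in>J. f i (restrict xi J i)) \<partial>noise)"
    by (intro nn_integral_cong prod.cong) auto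
  also have "\<dots> = (\<integral>\<^sup>+y. (\<Prod>i\<in>J. f i (y i)) \<partial>distr noise (PiM J (\<lambda>_. std_normal)) (\<lambda>xi. restrict xi J))"
    unfolding noise_def using assms
    by (subst nn_integral_distr) (auto intro!: measurable_restrict_subset)
  also have "\<dots> = (\<integral>\<^sup>+y. (\<Prod>i\<in>J. f i (y i)) \<partial>PiM J (\<lambda>_. std_normal))"
    unfolding noise_def using assms by (subst noise_factors.distr_PiM_restrict_finite) auto
  also have "\<dots> = (\<Prod>i\<in>J. \<integral>\<^sup>+x. f i x \<partial>std_normal)"
    using assms by (subst noise_factors.product_nn_integral_prod) auto
  finally show ?thesis .
qed

lemma integral_noise_le_prod:
  fixes g :: "(nat \<Rightarrow> real) \<Rightarrow> real" and f :: "nat \<Rightarrow> real \<Rightarrow> real"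
  assumes J: "finite J"
    and f_meas: "\<And>i. i \<in> J \<Longrightarrow> f i \<in> borel_measurable borel"
    and f_nonneg: "\<And>i x. 0 \<le> f i x"
    and f_int: "\<And>i. i \<in> J \<Longrightarrow> (\<integral>\<^sup>+x. f i x \<partial>std_normal) \<le> b i"
    and b_nonneg: "\<And>i. 0 \<le> b i" and c: "0 \<le> c"
    and g_le: "\<And>xi. g xi \<le> c * (\<Prod>i\<in>J. f i (xi i))"
  shows "(\<integral>xi. g xi \<partial>noise) \<le> c * (\<Prod>i\<in>J. b i)"
proof (rule integral_real_bounded)
  have "(\<integral>\<^sup>+xi. g xi \<partial>noise) \<le> (\<integral>\<^sup>+xi. ennreal c * (\<Prod>i\<in>J. ennreal (f i (xi i))) \<partial>noise)"
    using g_le f_nonneg c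
    by (intro nn_integral_mono) (simp add: prod_ennreal prod_nonneg ennreal_mult[symmetric] ennreal_leI)
  also have "\<dots> = ennreal c * (\<Prod>i\<in>J. \<integral>\<^sup>+x. f i x \<partial>std_normal)"
    using J f_meas
    by (subst nn_integral_cmult) (auto simp: noise_def nn_integral_noise_prod[symmetric])
  also have "\<dots> \<le> ennreal c * (\<Prod>i\<in>J. ennreal (b i))"
    using f_int by (intro mult_left_mono prod_mono_ennreal) auto
  also have "\<dots> = ennreal (c * (\<Prod>i\<in>J. b i))"
    using b_nonneg c by (simp add: prod_ennreal ennreal_mult prod_nonneg)
  finally show "(\<integral>\<^sup>+xi. g xi \<partial>noise) \<le> ennreal (c * (\<Prod>i\<in>J. b i))" .
  show "0 \<le> c * (\<Prod>i\<in>J. b i)" using b_nonneg c by (simp add: prod_nonneg)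
qed

lemma integrable_noise_coord_sq: "integrable noise (\<lambda>xi. (xi j)\<^sup>2)"
  and integral_noise_coord_sq: "(\<integral>xi. (xi j)\<^sup>2 \<partial>noise) = 1"
proof -
  have nn: "(\<integral>\<^sup>+xi. (xi j)\<^sup>2 \<partial>noise) = 1"
    using nn_integral_noise_prod[of "{j}" "\<lambda>_ x. ennreal (x\<^sup>2)"] nn_integral_std_normal_sq by simp
  show "integrable noise (\<lambda>xi. (xi j)\<^sup>2)"
    using nn by (intro integrableI_nn_integral_finite[where x=1]) (auto simp: noise_def)
  then show "(\<integral>xi. (xi j)\<^sup>2 \<partial>noise) = 1"
    using nn by (subst integral_eq_nn_integral) (auto simp: noise_def)
qed

lemma measurable_noise_component[measurable]: "(\<lambda>xi. xi j) \<in> borel_measurable noise"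
  unfolding noise_def by measurable

section \<open>The sequence model at a fixed noise level\<close>

lemma sum_atLeastAtMost_split:
  fixes f :: "nat \<Rightarrow> 'a::comm_monoid_add"
  assumes "a \<le> b"
  shows "(\<Sum>j=1..b. f j) = (\<Sum>j=1..a. f j) + (\<Sum>j\<in>{a<..b}. f j)"
proof -
  have "{1..b} = {1..a} \<union> {a<..b}" using assms by auto
  then show ?thesis by (simp add: sum.union_disjoint[symmetric] ivl_disj_int)
qed

locale gaussian_sequence_model =
  fixes lam th eta :: "nat \<Rightarrow> real" and tau :: "real \<Rightarrow> nat \<Rightarrow> real" and d C L eps :: real
  assumes lam_bdd: "bounded (range lam)"
    and lam_nz: "\<And>j. j \<ge> 1 \<Longrightarrow> lam j \<noteq> 0"
    and diff_l2: "summable (\<lambda>j. (th (Suc j) - eta (Suc j))\<^sup>2)"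
    and tau_pos: "\<And>j. j \<ge> 1 \<Longrightarrow> tau eps j > 0"
    and A: "assumptionA lam tau d" and E: "assumptionE lam C L"
    and eps: "0 < eps" "eps < 1"
    and m_circ_le_G: "mcirc lam th eta eps \<le> Gdim lam eps"
begin

abbreviation "G \<equiv> Gdim lam eps"
abbreviation "m_circ \<equiv> mcirc lam th eta eps"
abbreviation "m_minus \<equiv> mminus lam th eta C L d eps"
abbreviation "m_plus \<equiv> mplus lam th eta L eps"
abbreviation "Phi_min \<equiv> Phicirc lam th eta eps"
abbreviation "Ph \<equiv> Phi lam th eta eps"
abbreviation "b \<equiv> bias th eta"
abbreviation "sqd j \<equiv> (th j - eta j)\<^sup>2"
abbreviation "Lm \<equiv> Lam lam"
abbreviation "Lmx \<equiv> Lmax lam"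
abbreviation "sg j \<equiv> sig lam tau eps j"

lemma d_pos: "0 < d" and C_ge_1: "1 \<le> C" and L_ge_1: "1 \<le> L"
  using A E by (auto simp: assumptionA_def assumptionE_def)

lemma Lam_pos: "1 \<le> j \<Longrightarrow> 0 < Lm j"
  using lam_nz by (simp add: Lam_def)

lemma lam_sq_eq: "1 \<le> j \<Longrightarrow> (lam j)\<^sup>2 = 1 / Lm j"
  using lam_nz by (simp add: Lam_def)

lemma lam_sq_bounded: obtains B where "0 < B" "\<And>j. (lam j)\<^sup>2 \<le> B"
proof -
  obtain B where "0 < B" "\<And>j. \<bar>lam j\<bar> \<le> B"
    using lam_bdd unfolding bounded_pos by auto
  then have "(lam j)\<^sup>2 \<le> B\<^sup>2" for j
    by (metis abs_ge_zero power2_abs power_mono)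
  with \<open>0 < B\<close> show ?thesis by (intro that[of "B\<^sup>2"]) auto
qed

lemma Lam_le_Lmax: "1 \<le> j \<Longrightarrow> j \<le> m \<Longrightarrow> Lm j \<le> Lmx m"
  unfolding Lmax_def by (rule Max_ge) auto

lemma Lmax_attained: "1 \<le> m \<Longrightarrow> \<exists>i\<in>{1..m}. Lmx m = Lm i"
proof -
  assume "1 \<le> m"
  then have "Max (Lm ` {1..m}) \<in> Lm ` {1..m}" by (intro Max_in) auto
  then show ?thesis unfolding Lmax_def by auto
qed

lemma Lmax_pos: "1 \<le> m \<Longrightarrow> 0 < Lmx m"
  using Lam_le_Lmax[of 1 m] Lam_pos[of 1] by simp

lemma Lbar_eq_sum: "real m * Lbar lam m = (\<Sum>j=1..m. Lm j)"
  by (cases "m = 0") (simp_all add: Lbar_def)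

lemma Gdim_ge_1: "1 \<le> G" and eps_Lmax_Gdim_le: "eps * Lmx G \<le> Lm 1"
proof -
  define S where "S = {m \<in> {1..nat \<lfloor>1 / eps\<rfloor>}. eps * Lmx m \<le> Lm 1}"
  have "1 \<le> 1/eps" using eps by simp
  then have "1 \<le> nat \<lfloor>1/eps\<rfloor>" by linarith
  moreover have "eps * Lmx 1 \<le> Lm 1"
    using Lam_pos[of 1] eps by (simp add: Lmax_def mult_left_le_one_le)
  ultimately have "1 \<in> S" by (simp add: S_def)
  then have "G \<in> S" unfolding Gdim_def S_def[symmetric] by (intro Max_in) (auto simp: S_def)
  then show "1 \<le> G" "eps * Lmx G \<le> Lm 1" by (auto simp: S_def)
qed

lemma eps_Lam_le_Lam_1: "1 \<le> j \<Longrightarrow> j \<le> G \<Longrightarrow> eps * Lm j \<le> Lm 1"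
  using mult_left_mono[OF Lam_le_Lmax[of j G], of eps] eps eps_Lmax_Gdim_le by linarith

lemma sqd_summable_on: "(\<lambda>j. sqd j) summable_on A"
proof -
  have "summable (\<lambda>j. sqd j)" using diff_l2 by (subst summable_Suc_iff[symmetric]) simp
  then have "(\<lambda>j. sqd j) summable_on UNIV" by (rule summable_nonneg_imp_summable_on) simp
  then show ?thesis by (rule summable_on_subset) simp
qed

lemma bias_nonneg: "0 \<le> b m"
  unfolding bias_def by (rule infsum_nonneg) simp

lemma bias_split: "m \<le> k \<Longrightarrow> b m = (\<Sum>j\<in>{m<..k}. sqd j) + b k"
proof -
  assume "m \<le> k"
  then have "{m<..} = {m<..k} \<union> {k<..}" by auto
  then have "b m = infsum (\<lambda>j. sqd j) ({m<..k} \<union> {k<..})" by (simp add: bias_def)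
  also have "\<dots> = infsum (\<lambda>j. sqd j) {m<..k} + infsum (\<lambda>j. sqd j) {k<..}"
    by (rule infsum_Un_disjoint) (auto intro: sqd_summable_on)
  finally show ?thesis by (simp add: bias_def)
qed

lemma infsum_sqd_split: "(\<Sum>\<^sub>\<infinity> j\<in>{1..}. (eta j - th j)\<^sup>2) = (\<Sum>j=1..m. sqd j) + b m"
proof -
  have "{1..} = {1..m} \<union> {m<..}" by auto
  then have "(\<Sum>\<^sub>\<infinity> j\<in>{1..}. sqd j) = infsum (\<lambda>j. sqd j) ({1..m} \<union> {m<..})" by simp
  also have "\<dots> = infsum (\<lambda>j. sqd j) {1..m} + infsum (\<lambda>j. sqd j) {m<..}"
    by (rule infsum_Un_disjoint) (auto intro: sqd_summable_on)
  finally show ?thesis by (simp add: bias_def power2_commute)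
qed

lemma Phi_ge: "eps * (\<Sum>j=1..m. Lm j) \<le> Ph m" "b m \<le> Ph m"
  by (auto simp: Phi_def Lbar_eq_sum mult.assoc)

text \<open>Since \<open>\<lambda>\<close> is bounded, \<open>\<Phi>\<^sub>m \<ge> \<epsilon> m / B\<close> grows linearly, so the infimum of \<open>\<Phi>\<close> is attained
  on a finite initial segment.\<close>
lemma Phi_has_minimizer: "\<exists>m\<ge>1. \<forall>k\<ge>1. Ph m \<le> Ph k"
proof -
  obtain B where B: "0 < B" "\<And>j. (lam j)\<^sup>2 \<le> B" using lam_sq_bounded by blast
  have Lam_ge: "1 / B \<le> Lm j" if "1 \<le> j" for j
    using B lam_nz[OF that] unfolding Lam_def by (intro divide_left_mono) auto
  define N where "N = nat \<lceil>Ph 1 * B / eps\<rceil> + 1"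
  have N: "1 \<le> N" by (simp add: N_def)
  have "Min (Ph ` {1..N}) \<in> Ph ` {1..N}" using N by (intro Min_in) auto
  then obtain m where m: "m \<in> {1..N}" "Ph m = Min (Ph ` {1..N})" by auto
  have "Ph m \<le> Ph k" if k: "1 \<le> k" for k
  proof (cases "k \<le> N")
    case True then show ?thesis using m k by auto
  next
    case False
    have "Ph m \<le> Ph 1" using m N by auto
    also have "Ph 1 \<le> eps * (real N / B)"
    proof -
      have "Ph 1 * B / eps \<le> real N" unfolding N_def by linarith
      then show ?thesis using eps B by (simp add: field_simps)
    qed
    also have "\<dots> \<le> eps * (real k / B)"
      using False eps B(1) by (intro mult_left_mono divide_right_mono) auto
    also have "\<dots> = eps * (\<Sum>j=1..k. 1 / B)" by simp
    also have "\<dots> \<le> eps * (\<Sum>j=1..k. Lm j)" using Lam_ge eps by (intro mult_left_mono sum_mono) auto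
    also have "\<dots> \<le> Ph k" by (rule Phi_ge)
    finally show ?thesis .
  qed
  then show ?thesis using m by auto
qed

lemma m_circ_ge_1: "1 \<le> m_circ" and Phi_m_circ_le: "1 \<le> k \<Longrightarrow> Ph m_circ \<le> Ph k"
  using LeastI_ex[OF Phi_has_minimizer] unfolding mcirc_def by auto

lemma Phi_min_eq: "Phi_min = Ph m_circ"
  unfolding Phicirc_def by (rule cInf_eq_minimum) (use m_circ_ge_1 Phi_m_circ_le in auto)

lemma Phi_min_pos: "0 < Phi_min"
proof -
  have "0 < eps * (\<Sum>j=1..m_circ. Lm j)"
    using eps m_circ_ge_1 Lam_pos by (intro mult_pos_pos sum_pos) auto
  then show ?thesis using Phi_ge(1)[of m_circ] Phi_min_eq by simp
qed

lemma bias_m_circ_le: "b m_circ \<le> Phi_min"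
  using Phi_ge(2) Phi_min_eq by simp

definition kappa :: real where
  "kappa = Phi_min / (eps * Lmx m_circ)"

lemma kappa_pos: "0 < kappa"
  unfolding kappa_def using Phi_min_pos eps Lmax_pos m_circ_ge_1 by simp

lemma m_circ_le_L_kappa: "real m_circ \<le> L * kappa"
proof -
  have "0 < (\<Sum>j=1..m_circ. Lm j)" using m_circ_ge_1 Lam_pos by (intro sum_pos) auto
  then have Lbar_pos: "0 < Lbar lam m_circ" using m_circ_ge_1 unfolding Lbar_def by simp
  have "Lmx m_circ / Lbar lam m_circ \<le> L"
    using E m_circ_ge_1 by (auto simp: assumptionE_def)
  then have "Lmx m_circ \<le> L * Lbar lam m_circ" using Lbar_pos by (simp add: divide_le_eq)
  then have "(eps * m_circ) * Lmx m_circ \<le> (eps * m_circ) * (L * Lbar lam m_circ)"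
    using eps by (intro mult_left_mono) auto
  then have "eps * m_circ * Lmx m_circ \<le> L * (eps * m_circ * Lbar lam m_circ)"
    by (simp add: algebra_simps)
  also have "\<dots> \<le> L * Phi_min" using Phi_min_eq L_ge_1 by (intro mult_left_mono) (auto simp: Phi_def)
  finally show ?thesis unfolding kappa_def using eps Lmax_pos[OF m_circ_ge_1]
    by (simp add: field_simps)
qed

definition bias_threshold :: real where
  "bias_threshold = 8*L*C*(1+1/d)*Phi_min"

lemma Phi_min_le_bias_threshold: "Phi_min \<le> bias_threshold"
proof -
  have "1*1 \<le> L*C" by (rule mult_mono) (use L_ge_1 C_ge_1 in auto)
  moreover have "1 \<le> 1+1/d" using d_pos by simp
  ultimately have "1*1 \<le> (8*(L*C))*(1+1/d)" by (intro mult_mono) auto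
  then have "1 * Phi_min \<le> ((8*(L*C))*(1+1/d)) * Phi_min"
    using Phi_min_pos by (intro mult_right_mono) auto
  then show ?thesis unfolding bias_threshold_def by (simp add: mult.assoc)
qed

lemma m_minus_ge_1: "1 \<le> m_minus" and m_minus_le_m_circ: "m_minus \<le> m_circ"
  and bias_below_m_minus: "\<And>m. 1 \<le> m \<Longrightarrow> m < m_minus \<Longrightarrow> bias_threshold < b m"
proof -
  define S where "S = {m \<in> {1..m_circ}. b m \<le> bias_threshold}"
  have eq: "m_minus = Min S" unfolding mminus_def S_def bias_threshold_def by simp
  have "m_circ \<in> S"
    unfolding S_def using m_circ_ge_1 bias_m_circ_le Phi_min_le_bias_threshold by auto
  then have "m_minus \<in> S" unfolding eq by (intro Min_in) (auto simp: S_def)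
  then show "1 \<le> m_minus" "m_minus \<le> m_circ" unfolding S_def by auto
  fix m assume m: "1 \<le> m" "m < m_minus"
  show "bias_threshold < b m"
  proof (rule ccontr)
    assume "\<not> bias_threshold < b m"
    then have "m \<in> S" unfolding S_def using m \<open>m_minus \<le> m_circ\<close> by auto
    then have "m_minus \<le> m" unfolding eq by (simp add: S_def)
    then show False using m by simp
  qed
qed

lemma m_circ_le_m_plus: "m_circ \<le> m_plus" and m_plus_le_G: "m_plus \<le> G"
  and L_kappa_above_m_plus: "\<And>m. m_plus < m \<Longrightarrow> m \<le> G \<Longrightarrow> 5 * L * kappa < real m"
proof -
  define S where "S = {m \<in> {m_circ..G}. real m \<le> 5 * L * kappa}"
  have eq: "m_plus = Max S" unfolding mplus_def S_def kappa_def by simp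
  have "0 \<le> L * kappa" using kappa_pos L_ge_1 by simp
  then have "real m_circ \<le> 5 * L * kappa" using m_circ_le_L_kappa by linarith
  then have "m_circ \<in> S" unfolding S_def using m_circ_le_G by auto
  then have "m_plus \<in> S" unfolding eq by (intro Max_in) (auto simp: S_def)
  then show "m_circ \<le> m_plus" "m_plus \<le> G" unfolding S_def by auto
  fix m assume m: "m_plus < m" "m \<le> G"
  show "5 * L * kappa < real m"
  proof (rule ccontr)
    assume "\<not> 5 * L * kappa < real m"
    then have "m \<in> S" unfolding S_def using m \<open>m_circ \<le> m_plus\<close> by auto
    then have "m \<le> m_plus" unfolding eq by (simp add: S_def)
    then show False using m by simp
  qed
qed

lemma lam_sq_beyond_le: assumes "1 \<le> m" "m < j" shows "(lam j)\<^sup>2 \<le> C / Lmx m"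
proof -
  obtain B where B: "\<And>j. (lam j)\<^sup>2 \<le> B" using lam_sq_bounded by blast
  have "bdd_above ((\<lambda>j. (lam j)\<^sup>2) ` {m<..})"
    by (rule bdd_aboveI[of _ B]) (use B in auto)
  then have "(lam j)\<^sup>2 \<le> (SUP j\<in>{m<..}. (lam j)\<^sup>2)"
    using assms by (intro cSUP_upper) auto
  also have "\<dots> \<le> C * (MIN j\<in>{1..m}. (lam j)\<^sup>2)"
    using E assms by (auto simp: assumptionE_def)
  also have "\<dots> \<le> C / Lmx m"
  proof -
    obtain i where i: "i \<in> {1..m}" "Lmx m = Lm i" using Lmax_attained assms by blast
    then have "(MIN j\<in>{1..m}. (lam j)\<^sup>2) \<le> (lam i)\<^sup>2" by (intro Min_le) auto
    also have "\<dots> = 1 / Lmx m" using i lam_sq_eq by simp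
    finally have "(MIN j\<in>{1..m}. (lam j)\<^sup>2) \<le> 1 / Lmx m" .
    then show ?thesis using C_ge_1 by (simp add: mult_left_mono divide_inverse)
  qed
  finally show ?thesis .
qed

lemma lam_sq_upto_ge: "1 \<le> j \<Longrightarrow> j \<le> m \<Longrightarrow> 1 / Lmx m \<le> (lam j)\<^sup>2"
  using lam_sq_eq Lam_le_Lmax[of j m] Lam_pos[of j] by (simp add: frac_le)

definition shrink :: "nat \<Rightarrow> real" where
  "shrink j = sg j * (lam j)\<^sup>2 / eps"

lemma lam_sq_div_eps_pos: "1 \<le> j \<Longrightarrow> 0 < (lam j)\<^sup>2/eps"
  using lam_nz eps by simp

lemma shrink_eq: "shrink j = ((lam j)\<^sup>2/eps) / ((lam j)\<^sup>2/eps + 1/tau eps j)"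
  by (simp add: shrink_def sig_def)

lemma sig_div_tau_eq: "sg j / tau eps j = (1/tau eps j) / ((lam j)\<^sup>2/eps + 1/tau eps j)"
  by (simp add: sig_def)

lemma sig_pos: "1 \<le> j \<Longrightarrow> 0 < sg j"
  using lam_sq_div_eps_pos tau_pos by (simp add: sig_def add_pos_pos)

lemma sig_le_eps_Lam: "1 \<le> j \<Longrightarrow> sg j \<le> eps * Lm j"
proof -
  assume j: "1 \<le> j"
  define a c where "a = (lam j)\<^sup>2/eps" and "c = 1/tau eps j"
  have "0 < a" "0 < c" using lam_sq_div_eps_pos[OF j] tau_pos[OF j] by (simp_all add: a_def c_def)
  then have "1 / (a + c) \<le> 1 / a" by (intro divide_left_mono) auto
  then show ?thesis by (simp add: sig_def Lam_def a_def c_def)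
qed

lemma shrink_pos: "1 \<le> j \<Longrightarrow> 0 < shrink j"
  and shrink_le_1: "1 \<le> j \<Longrightarrow> shrink j \<le> 1"
proof -
  assume j: "1 \<le> j"
  define a c where "a = (lam j)\<^sup>2/eps" and "c = 1/tau eps j"
  have "0 < a" "0 < c" using lam_sq_div_eps_pos[OF j] tau_pos[OF j] by (simp_all add: a_def c_def)
  moreover have "shrink j = a / (a + c)" by (simp add: shrink_eq a_def c_def)
  ultimately show "0 < shrink j" "shrink j \<le> 1" by simp_all
qed

lemma tau_lower_bound: "1 \<le> j \<Longrightarrow> j \<le> G \<Longrightarrow> d * max (sqrt eps * sqrt (Lm j)) (eps * Lm j) \<le> tau eps j"
  using A eps unfolding assumptionA_def by auto

lemma shrink_ge: assumes j: "1 \<le> j" "j \<le> G" shows "d / (1 + d) \<le> shrink j"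
proof -
  define a c where "a = (lam j)\<^sup>2/eps" and "c = 1/tau eps j"
  have a: "0 < a" "0 < c" using lam_sq_div_eps_pos[OF j(1)] tau_pos[OF j(1)] by (simp_all add: a_def c_def)
  have "d * (eps * Lm j) \<le> tau eps j"
    using tau_lower_bound[OF j] d_pos mult_left_mono[of "eps * Lm j" _ d] by (smt (verit) max.cobounded2)
  then have "d * eps \<le> tau eps j * (lam j)\<^sup>2"
    using lam_nz j by (simp add: Lam_def divide_le_eq)
  then have "d * c \<le> a"
    unfolding a_def c_def using tau_pos[OF j(1)] eps by (simp add: field_simps)
  then have "d / (1 + d) \<le> a / (a + c)" using a d_pos by (simp add: field_simps)
  then show ?thesis by (simp add: shrink_eq a_def c_def)
qed

lemma sig_div_tau_sq_le: assumes j: "1 \<le> j" "j \<le> G" shows "(sg j / tau eps j)\<^sup>2 \<le> eps * Lm j / d\<^sup>2"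
proof -
  have el: "0 < eps * Lm j" using eps Lam_pos j by simp
  have "d * sqrt (eps * Lm j) \<le> tau eps j"
    using tau_lower_bound[OF j] d_pos mult_left_mono[of "sqrt (eps * Lm j)" _ d]
    by (smt (verit) max.cobounded1 real_sqrt_mult)
  have "sg j / tau eps j \<le> (1/tau eps j) / ((lam j)\<^sup>2/eps)"
  proof -
    define a c where "a = (lam j)\<^sup>2/eps" and "c = 1/tau eps j"
    have "0 < a" "0 < c" using lam_sq_div_eps_pos[OF j(1)] tau_pos[OF j(1)] by (simp_all add: a_def c_def)
    then have "c / (a + c) \<le> c / a" by (intro divide_left_mono) auto
    then show ?thesis by (simp add: sig_div_tau_eq a_def c_def)
  qed
  also have "\<dots> = eps * Lm j / tau eps j" by (simp add: Lam_def)
  also have "\<dots> \<le> eps * Lm j / (d * sqrt (eps * Lm j))"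
    using \<open>d * sqrt (eps * Lm j) \<le> tau eps j\<close> el d_pos tau_pos[OF j(1)]
    by (intro divide_left_mono) (auto intro!: mult_pos_pos)
  also have "\<dots> = sqrt (eps * Lm j) / d"
    using el d_pos by (metis (no_types, lifting) divide_divide_eq_left mult.commute real_div_sqrt less_le)
  finally have "sg j / tau eps j \<le> sqrt (eps * Lm j) / d" .
  moreover have "0 \<le> sg j / tau eps j" using sig_pos[OF j(1)] tau_pos[OF j(1)] by simp
  ultimately have "(sg j / tau eps j)\<^sup>2 \<le> (sqrt (eps * Lm j) / d)\<^sup>2" by (rule power_mono)
  also have "\<dots> = eps * Lm j / d\<^sup>2" using el by (simp add: power_divide)
  finally show ?thesis .
qed

lemma sig_div_tau_sq_le_1: "1 \<le> j \<Longrightarrow> (sg j / tau eps j)\<^sup>2 \<le> 1"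
proof -
  assume j: "1 \<le> j"
  define a c where "a = (lam j)\<^sup>2/eps" and "c = 1/tau eps j"
  have "0 < a" "0 < c" using lam_sq_div_eps_pos[OF j] tau_pos[OF j] by (simp_all add: a_def c_def)
  moreover have "sg j / tau eps j = c / (a + c)" by (simp add: sig_div_tau_eq a_def c_def)
  ultimately show ?thesis by (simp add: power_le_one)
qed

definition signal :: "nat \<Rightarrow> real" where
  "signal j = lam j * (th j - eta j) / sqrt eps"

lemma signal_sq_eq: "(signal j)\<^sup>2 = (lam j)\<^sup>2 * sqd j / eps"
  unfolding signal_def using eps by (simp add: power_mult_distrib power_divide)

lemma sqd_div_le_signal_sq:
  assumes "1 \<le> j" "j \<le> m" shows "sqd j / (eps * Lmx m) \<le> (signal j)\<^sup>2"
proof -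
  have "sqd j / (eps * Lmx m) = (1 / Lmx m) * sqd j / eps" by simp
  also have "\<dots> \<le> (lam j)\<^sup>2 * sqd j / eps"
    using lam_sq_upto_ge[OF assms] eps by (intro divide_right_mono mult_right_mono) auto
  finally show ?thesis by (simp add: signal_sq_eq)
qed

lemma signal_sq_le_beyond:
  assumes "1 \<le> m" "m < j" shows "(signal j)\<^sup>2 \<le> C / (eps * Lmx m) * sqd j"
proof -
  have "(signal j)\<^sup>2 \<le> (C / Lmx m) * sqd j / eps"
    unfolding signal_sq_eq using lam_sq_beyond_le[OF assms] eps
    by (intro divide_right_mono mult_right_mono) auto
  then show ?thesis by (simp add: mult.commute)
qed

lemma thetaY_obs_sq_div_sig:
  assumes j: "1 \<le> j"
  shows "(thetaY lam tau eta eps (obs lam th eps xi) j - eta j)\<^sup>2 / sg j = shrink j * (signal j + xi j)\<^sup>2"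
proof -
  have "sg j * ((lam j)\<^sup>2/eps + 1/tau eps j) = 1"
    using lam_sq_div_eps_pos[OF j] tau_pos[OF j] add_pos_pos[of "(lam j)\<^sup>2/eps" "1/tau eps j"]
    unfolding sig_def by simp
  then have "thetaY lam tau eta eps (obs lam th eps xi) j - eta j
      = sg j * (eta j / tau eps j + lam j * (lam j * th j + sqrt eps * xi j) / eps)
        - sg j * ((lam j)\<^sup>2/eps + 1/tau eps j) * eta j"
    unfolding thetaY_def obs_def by simp
  also have "\<dots> = sg j * lam j * (lam j * (th j - eta j) + sqrt eps * xi j) / eps"
    using eps by (simp add: field_simps power2_eq_square)
  finally have diff: "thetaY lam tau eta eps (obs lam th eps xi) j - eta j
      = sg j * lam j * (lam j * (th j - eta j) + sqrt eps * xi j) / eps" .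
  have "signal j + xi j = (lam j * (th j - eta j) + sqrt eps * xi j) / sqrt eps"
    unfolding signal_def using eps by (simp add: field_simps)
  then have "shrink j * (signal j + xi j)\<^sup>2
      = sg j * (lam j)\<^sup>2 / eps * (lam j * (th j - eta j) + sqrt eps * xi j)\<^sup>2 / eps"
    unfolding shrink_def using eps by (simp add: power_divide)
  also have "\<dots> = (sg j * lam j * (lam j * (th j - eta j) + sqrt eps * xi j) / eps)\<^sup>2 / sg j"
    using sig_pos[OF j] eps by (simp add: field_simps power2_eq_square)
  finally show ?thesis unfolding diff by simp
qed

definition log_weight :: "(nat \<Rightarrow> real) \<Rightarrow> nat \<Rightarrow> real" where
  "log_weight xi k = (\<Sum>j=1..k. shrink j * (signal j + xi j)\<^sup>2)/2 - 3*C*real k/2"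

abbreviation post :: "(nat \<Rightarrow> real) \<Rightarrow> nat \<Rightarrow> real" where
  "post xi m \<equiv> postM lam tau eta C eps (obs lam th eps xi) m"

lemma post_eq: "post xi m = exp (log_weight xi m) / (\<Sum>k=1..G. exp (log_weight xi k))"
proof -
  have "postw lam tau eta C eps (obs lam th eps xi) k = exp (log_weight xi k)" for k
    unfolding postw_def log_weight_def by (simp add: thetaY_obs_sq_div_sig)
  then show ?thesis unfolding postM_def by simp
qed

lemma post_measurable[measurable]: "(\<lambda>xi. post xi m) \<in> borel_measurable noise"
  unfolding postM_def postw_def thetaY_def obs_def by measurable

lemma sum_exp_log_weight_pos: "0 < (\<Sum>k=1..G. exp (log_weight xi k))"
  using Gdim_ge_1 by (intro sum_pos) auto

lemma post_nonneg: "0 \<le> post xi m"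
  unfolding post_eq using sum_exp_log_weight_pos[of xi] by simp

lemma sum_post: "(\<Sum>m=1..G. post xi m) = 1"
  unfolding post_eq using sum_exp_log_weight_pos[of xi] by (simp add: sum_divide_distrib[symmetric])

lemma post_le_1: "m \<in> {1..G} \<Longrightarrow> post xi m \<le> 1"
  using sum_post[of xi] member_le_sum[of m "{1..G}" "post xi"] post_nonneg by simp

text \<open>Comparing with the single competitor \<open>k\<close> in the normaliser; raising the ratio to a power
  \<open>s \<le> 1\<close> keeps the bound since the posterior is at most one.\<close>
lemma post_le_exp_log_weight_diff:
  assumes m: "m \<in> {1..G}" and k: "k \<in> {1..G}" and s: "0 < s" "s \<le> 1"
  shows "post xi m \<le> exp (s * (log_weight xi m - log_weight xi k))"
proof (cases "log_weight xi m \<le> log_weight xi k")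
  case True
  have "post xi m \<le> exp (log_weight xi m) / exp (log_weight xi k)"
    unfolding post_eq using member_le_sum[OF k, of "\<lambda>k. exp (log_weight xi k)"]
      sum_exp_log_weight_pos[of xi]
    by (intro divide_left_mono) (auto intro: mult_pos_pos)
  also have "\<dots> = exp (log_weight xi m - log_weight xi k)" by (simp add: exp_diff)
  also have "\<dots> \<le> exp (s * (log_weight xi m - log_weight xi k))"
    using True s mult_left_le_one_le[of "log_weight xi k - log_weight xi m" s]
    by (simp add: algebra_simps)
  finally show ?thesis .
next
  case False
  then show ?thesis using post_le_1[OF m, of xi] s by (smt (verit) one_le_exp_iff zero_less_mult_iff)
qed

lemma log_weight_diff:
  "k \<le> m \<Longrightarrow> log_weight xi m - log_weight xi k
     = (\<Sum>j\<in>{k<..m}. shrink j * (signal j + xi j)\<^sup>2)/2 - 3*C*(real m - real k)/2"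
  unfolding log_weight_def by (subst sum_atLeastAtMost_split[of k m]) (simp_all add: field_simps)

subsection \<open>Tail bounds for the posterior of the dimension\<close>

lemma missed_signal_below_m_minus:
  assumes m: "1 \<le> m" "m < m_minus"
  shows "(8*L*C - 1) * Phi_min \<le> d/(1+d) * (\<Sum>j\<in>{m<..m_circ}. sqd j)"
proof -
  define D where "D = d/(1+d)"
  have D: "0 < D" "D \<le> 1" using d_pos by (auto simp: D_def)
  have "0 < d + d*d" using d_pos mult_pos_pos[OF d_pos d_pos] by linarith
  then have "D * (1+1/d) = 1"
    unfolding D_def using d_pos by (simp add: field_simps)
  moreover have "D * bias_threshold = (D * (1+1/d)) * (8*L*C*Phi_min)"
    unfolding bias_threshold_def by (simp only: mult_ac)
  ultimately have D_threshold: "D * bias_threshold = 8*L*C*Phi_min" by simp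
  have "D * Phi_min \<le> Phi_min" using D Phi_min_pos by (simp add: mult_left_le_one_le)
  then have "(8*L*C - 1) * Phi_min \<le> D * (bias_threshold - Phi_min)"
    unfolding right_diff_distrib left_diff_distrib D_threshold by simp
  also have "\<dots> \<le> D * (\<Sum>j\<in>{m<..m_circ}. sqd j)"
    using bias_below_m_minus[OF m] bias_m_circ_le bias_split[of m m_circ] m m_minus_le_m_circ D
    by (intro mult_left_mono) auto
  finally show ?thesis by (simp add: D_def)
qed

lemma signal_energy_below_m_minus:
  assumes m: "1 \<le> m" "m < m_minus"
  shows "(8*L*C - 1) * kappa \<le> (\<Sum>j\<in>{m<..m_circ}. shrink j * (signal j)\<^sup>2)"
proof -
  define J where "J = {m<..m_circ}"
  define D where "D = d/(1+d)"
  have D: "0 \<le> D" using d_pos by (simp add: D_def)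
  have Lp: "0 < eps * Lmx m_circ" using Lmax_pos m_circ_ge_1 eps by simp
  have "(8*L*C - 1) * kappa = (8*L*C - 1) * Phi_min / (eps * Lmx m_circ)"
    unfolding kappa_def by simp
  also have "\<dots> \<le> D * (\<Sum>j\<in>J. sqd j) / (eps * Lmx m_circ)"
    using missed_signal_below_m_minus[OF m] Lp unfolding D_def J_def
    by (rule divide_right_mono[OF _ less_imp_le])
  also have "\<dots> = D * (\<Sum>j\<in>J. sqd j / (eps * Lmx m_circ))"
    by (simp add: sum_divide_distrib[symmetric])
  also have "\<dots> \<le> D * (\<Sum>j\<in>J. (signal j)\<^sup>2)"
  proof -
    have "sqd j / (eps * Lmx m_circ) \<le> (signal j)\<^sup>2" if "j \<in> J" for j
      using that m by (intro sqd_div_le_signal_sq) (auto simp: J_def)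
    then show ?thesis using D by (simp add: mult_left_mono sum_mono)
  qed
  also have "\<dots> \<le> (\<Sum>j\<in>J. shrink j * (signal j)\<^sup>2)"
  proof -
    have "D * (signal j)\<^sup>2 \<le> shrink j * (signal j)\<^sup>2" if "j \<in> J" for j
      using that m m_circ_le_G shrink_ge unfolding D_def by (intro mult_right_mono) (auto simp: J_def)
    then show ?thesis unfolding sum_distrib_left by (rule sum_mono)
  qed
  finally show ?thesis by (simp add: J_def)
qed

lemma lower_tail_exponent_le:
  assumes m: "1 \<le> m" "m < m_minus"
  shows "3*C*(real m_circ - real m)/2 - (\<Sum>j\<in>{m<..m_circ}. shrink j * (signal j)\<^sup>2)/4 \<le> - real m_circ / 5"
proof -
  define P where "P = L*C*kappa"
  have "1 \<le> L*C" using L_ge_1 C_ge_1 by (metis mult_mono' mult_1 zero_le_one order_trans)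
  then have "kappa \<le> P" using kappa_pos by (simp add: P_def)
  have "L*kappa \<le> P" using C_ge_1 kappa_pos L_ge_1 by (simp add: P_def)
  then have "real m_circ \<le> P" "C * real m_circ \<le> P"
    using m_circ_le_L_kappa mult_left_mono[OF m_circ_le_L_kappa, of C] C_ge_1
    by (simp_all add: P_def algebra_simps)
  moreover have "8*P - kappa \<le> (\<Sum>j\<in>{m<..m_circ}. shrink j * (signal j)\<^sup>2)"
    using signal_energy_below_m_minus[OF m] by (simp add: P_def algebra_simps)
  moreover have "0 \<le> C * real m" using C_ge_1 by simp
  moreover have "3*C*(real m_circ - real m)/2 = 3/2 * (C * real m_circ) - 3/2 * (C * real m)"
    by (simp add: field_simps)
  ultimately show ?thesis using \<open>kappa \<le> P\<close> by linarith
qed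

lemma integral_post_below_m_minus:
  assumes m: "1 \<le> m" "m < m_minus"
  shows "(\<integral>xi. post xi m \<partial>noise) \<le> exp (- real m_circ / 5)"
proof -
  define J where "J = {m<..m_circ}"
  define c where "c = exp (3*C*(real m_circ - real m)/2)"
  have mmc: "m \<le> m_circ" using m m_minus_le_m_circ by simp
  have mG: "m \<in> {1..G}" "m_circ \<in> {1..G}" using m mmc m_circ_le_G m_circ_ge_1 by auto
  have "(\<integral>xi. post xi m \<partial>noise) \<le> c * (\<Prod>i\<in>J. exp (-shrink i*(signal i)\<^sup>2/4))"
  proof (rule integral_noise_le_prod[where f="\<lambda>i x. exp (-(shrink i/2)*(signal i + x)\<^sup>2)"])
    show "post xi m \<le> c * (\<Prod>i\<in>J. exp (-(shrink i/2)*(signal i + xi i)\<^sup>2))" for xi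
    proof -
      have "post xi m \<le> exp (1 * (log_weight xi m - log_weight xi m_circ))"
        by (rule post_le_exp_log_weight_diff[OF mG]) auto
      also have "log_weight xi m - log_weight xi m_circ
          = 3*C*(real m_circ - real m)/2 + (\<Sum>i\<in>J. -(shrink i/2)*(signal i + xi i)\<^sup>2)"
        using log_weight_diff[OF mmc, of xi] unfolding J_def
        by (simp add: sum_divide_distrib sum_negf field_simps)
      finally show ?thesis unfolding c_def by (simp add: exp_add exp_sum J_def)
    qed
    show "(\<integral>\<^sup>+x. exp (-(shrink i/2)*(signal i + x)\<^sup>2) \<partial>std_normal) \<le> exp (-shrink i*(signal i)\<^sup>2/4)"
      if "i \<in> J" for i
      using that m shrink_pos[of i] shrink_le_1[of i]
      by (intro nn_integral_std_normal_exp_neg_shifted_square_le) (auto simp: J_def)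
  qed (auto simp: J_def c_def)
  also have "\<dots> = exp (3*C*(real m_circ - real m)/2 - (\<Sum>i\<in>J. shrink i*(signal i)\<^sup>2)/4)"
    unfolding c_def by (simp add: exp_sum[symmetric] J_def sum_negf sum_divide_distrib flip: exp_add)
  also have "\<dots> \<le> exp (- real m_circ / 5)"
    using lower_tail_exponent_le[OF m] by (simp add: J_def)
  finally show ?thesis .
qed

lemma signal_energy_above_m_circ:
  assumes "m_circ \<le> m"
  shows "(\<Sum>j\<in>{m_circ<..m}. (signal j)\<^sup>2) \<le> C * kappa"
proof -
  have Lp: "0 < eps * Lmx m_circ" using Lmax_pos m_circ_ge_1 eps by simp
  have "(\<Sum>j\<in>{m_circ<..m}. (signal j)\<^sup>2) \<le> (\<Sum>j\<in>{m_circ<..m}. C / (eps * Lmx m_circ) * sqd j)"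
    using signal_sq_le_beyond[OF m_circ_ge_1] by (intro sum_mono) auto
  also have "\<dots> = C / (eps * Lmx m_circ) * (\<Sum>j\<in>{m_circ<..m}. sqd j)"
    by (simp add: sum_distrib_left)
  also have "\<dots> \<le> C / (eps * Lmx m_circ) * Phi_min"
    using bias_split[OF assms] bias_nonneg[of m] bias_m_circ_le C_ge_1 Lp
    by (intro mult_left_mono) auto
  finally show ?thesis unfolding kappa_def by simp
qed

lemma upper_tail_exponent_le:
  assumes m: "m_plus < m" "m \<le> G"
  shows "-3*C*(real m - real m_circ)/8 + (real m - real m_circ)/5
    + (\<Sum>j\<in>{m_circ<..m}. (signal j)\<^sup>2)/4 \<le> - real m_circ / 5"
proof -
  define n where "n = real m - real m_circ"
  have energy: "(\<Sum>j\<in>{m_circ<..m}. (signal j)\<^sup>2) \<le> C * kappa"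
    using signal_energy_above_m_circ m_circ_le_m_plus m by simp
  have "5 * L * kappa < real m" using L_kappa_above_m_plus m by simp
  moreover have "kappa \<le> L * kappa" using L_ge_1 kappa_pos by simp
  ultimately have "4 * kappa \<le> n" "4 * real m_circ \<le> n"
    unfolding n_def using m_circ_le_L_kappa by linarith+
  moreover have "n \<le> C * n" using C_ge_1 \<open>4 * kappa \<le> n\<close> kappa_pos by (simp add: mult_le_cancel_right1)
  moreover have "C * kappa \<le> C * (n/4)" using \<open>4 * kappa \<le> n\<close> C_ge_1 by (intro mult_left_mono) auto
  moreover have "-3*C*(real m - real m_circ)/8 = -3/8 * (C * n)" unfolding n_def by (simp add: field_simps)
  ultimately show ?thesis unfolding n_def[symmetric] using energy by linarith
qed

text \<open>The exponent \<open>1/4\<close> turns each factor into \<open>exp ((shrink i / 8) (signal i + \<xi>\<^sub>i)\<^sup>2)\<close>, whose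
  Gaussian moment generating function stays finite even after multiplication by \<open>\<xi>\<^sub>j\<^sup>2\<close>.\<close>
lemma sq_mult_post_le_prod:
  assumes m: "m_circ \<le> m" "m \<le> G" and j: "j \<in> {m_circ<..m}"
  shows "(xi j)\<^sup>2 * post xi m \<le> exp (-3*C*(real m - real m_circ)/8) *
    (\<Prod>i\<in>{m_circ<..m}. (if i = j then (xi i)\<^sup>2 else 1) * exp ((shrink i/8)*(signal i + xi i)\<^sup>2))"
proof -
  define J where "J = {m_circ<..m}"
  have mG: "m \<in> {1..G}" "m_circ \<in> {1..G}" using m m_circ_le_G m_circ_ge_1 by auto
  have "post xi m \<le> exp ((1/4) * (log_weight xi m - log_weight xi m_circ))"
    by (rule post_le_exp_log_weight_diff[OF mG]) auto
  also have "(1/4) * (log_weight xi m - log_weight xi m_circ)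
      = -3*C*(real m - real m_circ)/8 + (\<Sum>i\<in>J. (shrink i/8)*(signal i + xi i)\<^sup>2)"
  proof -
    have "(\<Sum>i\<in>J. shrink i * (signal i + xi i)\<^sup>2) = 8 * (\<Sum>i\<in>J. (shrink i/8)*(signal i + xi i)\<^sup>2)"
      unfolding sum_distrib_left by (rule sum.cong) auto
    then show ?thesis using log_weight_diff[OF m(1), of xi] unfolding J_def by (simp add: field_simps)
  qed
  finally have "post xi m \<le> exp (-3*C*(real m - real m_circ)/8) * (\<Prod>i\<in>J. exp ((shrink i/8)*(signal i + xi i)\<^sup>2))"
    by (simp only: exp_add exp_sum J_def finite_greaterThanAtMost)
  then have "(xi j)\<^sup>2 * post xi m
      \<le> (xi j)\<^sup>2 * (exp (-3*C*(real m - real m_circ)/8) * (\<Prod>i\<in>J. exp ((shrink i/8)*(signal i + xi i)\<^sup>2)))"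
    by (intro mult_left_mono) auto
  also have "\<dots> = exp (-3*C*(real m - real m_circ)/8) *
      (\<Prod>i\<in>J. (if i = j then (xi i)\<^sup>2 else 1) * exp ((shrink i/8)*(signal i + xi i)\<^sup>2))"
    unfolding prod.distrib using j by (simp add: J_def)
  finally show ?thesis by (simp add: J_def)
qed

lemma integral_sq_post_above_m_plus:
  assumes jm: "m_plus < j" "j \<le> m" "m \<le> G"
  shows "(\<integral>xi. (xi j)\<^sup>2 * post xi m \<partial>noise) \<le> 5 * exp (- real m_circ / 5)"
proof -
  define J where "J = {m_circ<..m}"
  define c where "c = exp (-3*C*(real m - real m_circ)/8)"
  define h where "h i x = (if i = j then x\<^sup>2 else 1) * exp ((shrink i/8)*(signal i + x)\<^sup>2)" for i x
  define bound where "bound i = (if i = j then 5 else exp (1/5)) * exp ((signal i)\<^sup>2/4)" for i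
  have mcm: "m_circ \<le> m" using m_circ_le_m_plus jm by simp
  have jJ: "j \<in> J" using m_circ_le_m_plus jm by (auto simp: J_def)
  have finJ: "finite J" by (simp add: J_def)
  have "(\<integral>xi. (xi j)\<^sup>2 * post xi m \<partial>noise) \<le> c * (\<Prod>i\<in>J. bound i)"
  proof (rule integral_noise_le_prod[where f=h])
    show "(xi j)\<^sup>2 * post xi m \<le> c * (\<Prod>i\<in>J. h i (xi i))" for xi
      using sq_mult_post_le_prod[OF mcm jm(3), of j xi] jJ unfolding J_def c_def h_def by simp
  next
    fix i assume "i \<in> J"
    then have r: "0 \<le> shrink i" "shrink i \<le> 1"
      using shrink_pos shrink_le_1 m_circ_ge_1 by (auto simp: J_def less_imp_le)
    show "(\<integral>\<^sup>+x. h i x \<partial>std_normal) \<le> bound i"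
      unfolding h_def bound_def
      using nn_integral_std_normal_sq_mult_exp_shifted_square_le[OF r, of "signal i"]
        nn_integral_std_normal_exp_shifted_square_le[OF r, of "signal i"]
      by (cases "i = j") simp_all
  next
    show "h i \<in> borel_measurable borel" for i
      unfolding h_def by measurable
  qed (auto simp: finJ h_def bound_def c_def)
  also have "c * (\<Prod>i\<in>J. bound i) \<le> 5 * exp (- real m_circ / 5)"
  proof -
    have "(\<Prod>i\<in>J. (if i = j then 5 else exp (1/5::real))) \<le> (\<Prod>i\<in>J. (if i = j then 5 else 1) * exp (1/5))"
      by (intro prod_mono) auto
    also have "\<dots> = 5 * exp (1/5) ^ card J" using jJ finJ by (simp add: prod.distrib)
    also have "\<dots> = 5 * exp ((real m - real m_circ)/5)"
      using mcm by (simp add: J_def exp_of_nat_mult[symmetric] of_nat_diff)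
    finally have prod_if: "(\<Prod>i\<in>J. (if i = j then 5 else exp (1/5::real))) \<le> 5 * exp ((real m - real m_circ)/5)" .
    have "(\<Prod>i\<in>J. bound i) = (\<Prod>i\<in>J. (if i = j then 5 else exp (1/5))) * exp ((\<Sum>i\<in>J. (signal i)\<^sup>2)/4)"
      unfolding bound_def prod.distrib by (simp add: exp_sum finJ sum_divide_distrib)
    then have "c * (\<Prod>i\<in>J. bound i) \<le> c * (5 * exp ((real m - real m_circ)/5) * exp ((\<Sum>i\<in>J. (signal i)\<^sup>2)/4))"
      using prod_if by (simp only:) (intro mult_left_mono mult_right_mono, auto simp: c_def)
    also have "\<dots> = 5 * exp (-3*C*(real m - real m_circ)/8 + (real m - real m_circ)/5 + (\<Sum>i\<in>J. (signal i)\<^sup>2)/4)"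
      unfolding c_def by (simp only: exp_add mult_ac)
    also have "\<dots> \<le> 5 * exp (- real m_circ / 5)"
      using upper_tail_exponent_le[of m] jm unfolding J_def by simp
    finally show ?thesis .
  qed
  finally show ?thesis .
qed

subsection \<open>The bias and variance terms\<close>

definition post_head :: "(nat \<Rightarrow> real) \<Rightarrow> nat \<Rightarrow> real" where
  "post_head xi j = (\<Sum>m\<in>{1..<j}. post xi m)"

definition post_tail :: "(nat \<Rightarrow> real) \<Rightarrow> nat \<Rightarrow> real" where
  "post_tail xi j = (\<Sum>m=j..G. post xi m)"

lemma post_head_nonneg: "0 \<le> post_head xi j"
  unfolding post_head_def by (intro sum_nonneg post_nonneg)

lemma post_tail_nonneg: "0 \<le> post_tail xi j"
  unfolding post_tail_def by (intro sum_nonneg post_nonneg)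

lemma post_tail_le_1: "1 \<le> j \<Longrightarrow> post_tail xi j \<le> 1"
  unfolding post_tail_def using sum_post[of xi]
  by (metis atLeastatMost_subset_iff le_refl post_nonneg sum_mono2 finite_atLeastAtMost)

lemma post_head_add_tail: "1 \<le> j \<Longrightarrow> j \<le> G \<Longrightarrow> post_head xi j + post_tail xi j = 1"
proof -
  assume "1 \<le> j" "j \<le> G"
  then have "{1..G} = {1..<j} \<union> {j..G}" by auto
  then show ?thesis
    using sum_post[of xi] unfolding post_head_def post_tail_def
    by (simp add: sum.union_disjoint[symmetric] ivl_disj_int)
qed

lemma integrable_post: "m \<in> {1..G} \<Longrightarrow> integrable noise (\<lambda>xi. post xi m)"
  by (rule noise.integrable_const_bound[where B=1]) (use post_nonneg post_le_1 in auto)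

lemma integrable_sq_post:
  assumes "m \<in> {1..G}" shows "integrable noise (\<lambda>xi. (xi j)\<^sup>2 * post xi m)"
proof (rule Bochner_Integration.integrable_bound[OF integrable_noise_coord_sq[of j]])
  show "(\<lambda>xi. (xi j)\<^sup>2 * post xi m) \<in> borel_measurable noise" by measurable
  show "AE xi in noise. norm ((xi j)\<^sup>2 * post xi m) \<le> norm ((xi j)\<^sup>2)"
    using post_nonneg post_le_1[OF assms] by (intro AE_I2) (simp add: mult_left_le)
qed

definition bias_weight :: "nat \<Rightarrow> real" where
  "bias_weight j = (\<integral>xi. post_head xi j + (sg j / tau eps j)\<^sup>2 * post_tail xi j \<partial>noise)"

lemma bias_weight_le_1: assumes j: "1 \<le> j" "j \<le> G" shows "bias_weight j \<le> 1"
proof -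
  have "post_head xi j + (sg j / tau eps j)\<^sup>2 * post_tail xi j \<le> 1" for xi
    using post_head_add_tail[OF j, of xi] post_tail_nonneg[of xi j]
      mult_right_mono[OF sig_div_tau_sq_le_1[OF j(1)] post_tail_nonneg[of xi j]]
    by linarith
  then have "bias_weight j \<le> (\<integral>xi. 1 \<partial>noise)"
    unfolding bias_weight_def by (intro integral_mono') auto
  then show ?thesis by (simp add: noise.prob_space)
qed

lemma bias_weight_below_m_minus:
  assumes j: "1 \<le> j" "j \<le> m_minus"
  shows "bias_weight j \<le> real G * exp (- real m_circ / 5) + eps * Lmx m_minus / d\<^sup>2"
proof -
  define q where "q = (sg j / tau eps j)\<^sup>2"
  define e where "e = exp (- real m_circ / 5)"
  have jG: "j \<le> G" using j m_minus_le_m_circ m_circ_le_G by simp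
  have q0: "0 \<le> q" by (simp add: q_def)
  have "q \<le> eps * Lm j / d\<^sup>2" unfolding q_def by (rule sig_div_tau_sq_le[OF j(1) jG])
  also have "\<dots> \<le> eps * Lmx m_minus / d\<^sup>2"
    using Lam_le_Lmax[OF j] eps by (intro divide_right_mono mult_left_mono) auto
  finally have q_le: "q \<le> eps * Lmx m_minus / d\<^sup>2" .
  have int: "\<And>m. m \<in> {1..<j} \<Longrightarrow> integrable noise (\<lambda>xi. post xi m)"
    using integrable_post jG by auto
  have "post_head xi j + q * post_tail xi j \<le> post_head xi j + q" for xi
    using q0 post_tail_le_1[OF j(1), of xi] mult_left_mono[of "post_tail xi j" 1 q] by simp
  moreover have int_head: "integrable noise (\<lambda>xi. post_head xi j)"
    unfolding post_head_def using int by (intro Bochner_Integration.integrable_sum) auto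
  ultimately have "bias_weight j \<le> (\<integral>xi. post_head xi j + q \<partial>noise)"
    unfolding bias_weight_def q_def[symmetric] using q0 post_head_nonneg
    by (intro integral_mono') (auto intro: add_nonneg_nonneg)
  also have "\<dots> = (\<Sum>m\<in>{1..<j}. \<integral>xi. post xi m \<partial>noise) + q"
  proof -
    have "(\<integral>xi. post_head xi j \<partial>noise) = (\<Sum>m\<in>{1..<j}. \<integral>xi. post xi m \<partial>noise)"
      unfolding post_head_def by (rule Bochner_Integration.integral_sum) (rule int)
    then show ?thesis using int_head by (simp add: noise.prob_space)
  qed
  also have "\<dots> \<le> (\<Sum>m\<in>{1..<j}. e) + q"
    using integral_post_below_m_minus j unfolding e_def by (intro add_right_mono sum_mono) auto
  also have "\<dots> \<le> real G * e + eps * Lmx m_minus / d\<^sup>2"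
  proof -
    have "real (j - 1) * e \<le> real G * e" using jG by (intro mult_right_mono) (auto simp: e_def)
    then show ?thesis using q_le by simp
  qed
  finally show ?thesis by (simp add: e_def)
qed

lemma bias_term_le:
  "(\<Sum>j=1..G. (eta j - th j)\<^sup>2 * bias_weight j) + (\<Sum>\<^sub>\<infinity> j\<in>{G<..}. (eta j - th j)\<^sup>2)
   \<le> b m_minus + (\<Sum>\<^sub>\<infinity> j\<in>{1..}. (eta j - th j)\<^sup>2)
        * (eps * Lmx m_minus / d\<^sup>2 + 2 * exp (- real m_circ / 5 + ln (real G)))"
proof -
  define X where "X = real G * exp (- real m_circ / 5) + eps * Lmx m_minus / d\<^sup>2"
  define Y where "Y = eps * Lmx m_minus / d\<^sup>2 + 2 * exp (- real m_circ / 5 + ln (real G))"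
  have mG: "m_minus \<le> G" using m_minus_le_m_circ m_circ_le_G by simp
  have X0: "0 \<le> X" unfolding X_def using eps Lmax_pos[OF m_minus_ge_1] by simp
  have G0: "0 < real G" using Gdim_ge_1 by simp
  have "exp (- real m_circ / 5 + ln (real G)) = real G * exp (- real m_circ / 5)"
    using G0 by (simp only: exp_add exp_ln mult.commute)
  then have XY: "X \<le> Y" unfolding X_def Y_def using G0 by simp
  have sqd_eq: "\<And>j. (eta j - th j)\<^sup>2 = sqd j" by (simp add: power2_commute)
  have "(\<Sum>j=1..G. sqd j * bias_weight j)
      = (\<Sum>j=1..m_minus. sqd j * bias_weight j) + (\<Sum>j\<in>{m_minus<..G}. sqd j * bias_weight j)"
    by (rule sum_atLeastAtMost_split[OF mG])
  also have "\<dots> \<le> (\<Sum>j=1..m_minus. sqd j * X) + (\<Sum>j\<in>{m_minus<..G}. sqd j)"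
  proof (intro add_mono sum_mono)
    show "sqd j * bias_weight j \<le> sqd j * X" if "j \<in> {1..m_minus}" for j
      using that unfolding X_def by (intro mult_left_mono bias_weight_below_m_minus) auto
    show "sqd j * bias_weight j \<le> sqd j" if "j \<in> {m_minus<..G}" for j
      using that m_minus_ge_1 mult_left_mono[OF bias_weight_le_1, of j "sqd j"] by simp
  qed
  also have "\<dots> = X * (\<Sum>j=1..m_minus. sqd j) + (b m_minus - b G)"
    using bias_split[OF mG] by (simp add: sum_distrib_left mult.commute)
  also have "X * (\<Sum>j=1..m_minus. sqd j) \<le> Y * (\<Sum>\<^sub>\<infinity> j\<in>{1..}. (eta j - th j)\<^sup>2)"
    using XY X0 infsum_sqd_split[of m_minus] bias_nonneg[of m_minus]
    by (intro mult_mono) (auto intro: sum_nonneg)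
  finally show ?thesis
    unfolding sqd_eq by (simp add: bias_def power2_commute Y_def mult.commute)
qed

definition variance_weight :: "nat \<Rightarrow> real" where
  "variance_weight j = (\<integral>xi. ((obs lam th eps xi j - lam j * th j) * post_tail xi j)\<^sup>2 \<partial>noise)"

lemma obs_noise_sq: "((obs lam th eps xi j - lam j * th j) * p)\<^sup>2 = eps * ((xi j)\<^sup>2 * p\<^sup>2)"
  unfolding obs_def using eps by (simp add: power_mult_distrib)

lemma variance_weight_le_eps: assumes j: "1 \<le> j" shows "variance_weight j \<le> eps"
proof -
  have "((obs lam th eps xi j - lam j * th j) * post_tail xi j)\<^sup>2 \<le> eps * (xi j)\<^sup>2" for xi
  proof -
    have "(post_tail xi j)\<^sup>2 \<le> 1"
      using post_tail_nonneg post_tail_le_1[OF j] by (simp add: power_le_one)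
    then show ?thesis
      unfolding obs_noise_sq using eps mult_left_mono[of "(post_tail xi j)\<^sup>2" 1 "(xi j)\<^sup>2"]
      by (simp add: mult_left_mono)
  qed
  then have "variance_weight j \<le> (\<integral>xi. eps * (xi j)\<^sup>2 \<partial>noise)"
    unfolding variance_weight_def using eps integrable_noise_coord_sq
    by (intro integral_mono') auto
  then show ?thesis by (simp add: integral_noise_coord_sq)
qed

lemma variance_weight_above_m_plus:
  assumes j: "m_plus < j" "j \<le> G"
  shows "variance_weight j \<le> eps * (real G * (5 * exp (- real m_circ / 5)))"
proof -
  define e where "e = 5 * exp (- real m_circ / 5)"
  have j1: "1 \<le> j" using j m_circ_le_m_plus m_circ_ge_1 by simp
  have int: "\<And>m. m \<in> {j..G} \<Longrightarrow> integrable noise (\<lambda>xi. (xi j)\<^sup>2 * post xi m)"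
    using integrable_sq_post j1 by auto
  have "((obs lam th eps xi j - lam j * th j) * post_tail xi j)\<^sup>2
      \<le> eps * (\<Sum>m=j..G. (xi j)\<^sup>2 * post xi m)" for xi
  proof -
    have "(post_tail xi j)\<^sup>2 \<le> post_tail xi j"
      using post_tail_nonneg post_tail_le_1[OF j1] by (simp add: power2_eq_square mult_left_le_one_le)
    then have "(xi j)\<^sup>2 * (post_tail xi j)\<^sup>2 \<le> (\<Sum>m=j..G. (xi j)\<^sup>2 * post xi m)"
      unfolding post_tail_def sum_distrib_left[symmetric] by (intro mult_left_mono) auto
    then show ?thesis unfolding obs_noise_sq using eps by (intro mult_left_mono) auto
  qed
  then have "variance_weight j \<le> (\<integral>xi. eps * (\<Sum>m=j..G. (xi j)\<^sup>2 * post xi m) \<partial>noise)"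
    unfolding variance_weight_def using int post_nonneg eps
    by (intro integral_mono') (auto intro!: mult_nonneg_nonneg sum_nonneg)
  also have "\<dots> = eps * (\<Sum>m=j..G. \<integral>xi. (xi j)\<^sup>2 * post xi m \<partial>noise)"
    using int by (simp add: integral_sum)
  also have "\<dots> \<le> eps * (\<Sum>m=j..G. e)"
    using integral_sq_post_above_m_plus j eps unfolding e_def by (intro mult_left_mono sum_mono) auto
  also have "\<dots> \<le> eps * (real G * e)"
    using eps j1 by (intro mult_left_mono mult_right_mono) (auto simp: e_def)
  finally show ?thesis by (simp add: e_def)
qed

lemma variance_factor_le: "1 \<le> j \<Longrightarrow> (sg j)\<^sup>2 * (lam j)\<^sup>2 / eps\<^sup>2 * eps \<le> eps * Lm j"
proof -
  assume j: "1 \<le> j"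
  have "(sg j)\<^sup>2 * (lam j)\<^sup>2 / eps\<^sup>2 * eps = sg j * shrink j"
    unfolding shrink_def using eps by (simp add: power2_eq_square)
  also have "\<dots> \<le> sg j" using shrink_le_1[OF j] sig_pos[OF j] by (simp add: mult_left_le_one_le)
  also have "\<dots> \<le> eps * Lm j" by (rule sig_le_eps_Lam[OF j])
  finally show ?thesis .
qed

lemma variance_summand_le:
  "1 \<le> j \<Longrightarrow> (sg j)\<^sup>2 * (lam j)\<^sup>2 / eps\<^sup>2 * variance_weight j \<le> eps * Lm j"
  using mult_left_mono[OF variance_weight_le_eps, of j "(sg j)\<^sup>2 * (lam j)\<^sup>2 / eps\<^sup>2"]
    variance_factor_le[of j] by simp

lemma variance_summand_above_m_plus:
  assumes j: "m_plus < j" "j \<le> G"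
  shows "(sg j)\<^sup>2 * (lam j)\<^sup>2 / eps\<^sup>2 * variance_weight j \<le> Lm 1 * (real G * (5 * exp (- real m_circ / 5)))"
proof -
  define e where "e = real G * (5 * exp (- real m_circ / 5))"
  have j1: "1 \<le> j" using j m_circ_le_m_plus m_circ_ge_1 by simp
  have e0: "0 \<le> e" by (simp add: e_def)
  have "(sg j)\<^sup>2 * (lam j)\<^sup>2 / eps\<^sup>2 * variance_weight j \<le> (sg j)\<^sup>2 * (lam j)\<^sup>2 / eps\<^sup>2 * (eps * e)"
    using variance_weight_above_m_plus[OF j] unfolding e_def by (intro mult_left_mono) auto
  also have "\<dots> = ((sg j)\<^sup>2 * (lam j)\<^sup>2 / eps\<^sup>2 * eps) * e" by simp
  also have "\<dots> \<le> (eps * Lm j) * e"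
    using variance_factor_le[OF j1] e0 by (intro mult_right_mono)
  also have "\<dots> \<le> Lm 1 * e"
    using eps_Lam_le_Lam_1[OF j1 j(2)] e0 by (intro mult_right_mono)
  finally show ?thesis by (simp add: e_def)
qed

lemma variance_term_le:
  "(\<Sum>j=1..G. (sg j)\<^sup>2 * (lam j)\<^sup>2 / eps\<^sup>2 * variance_weight j)
   \<le> eps * real m_plus * Lbar lam m_plus + 10 * Lm 1 * exp (- real m_circ / 5 + 2 * ln (real G))"
proof -
  define e where "e = Lm 1 * (real G * (5 * exp (- real m_circ / 5)))"
  have G0: "0 < real G" using Gdim_ge_1 by simp
  have e0: "0 \<le> e" using Lam_pos[of 1] by (simp add: e_def)
  have "(\<Sum>j=1..G. (sg j)\<^sup>2 * (lam j)\<^sup>2 / eps\<^sup>2 * variance_weight j)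
      = (\<Sum>j=1..m_plus. (sg j)\<^sup>2 * (lam j)\<^sup>2 / eps\<^sup>2 * variance_weight j)
        + (\<Sum>j\<in>{m_plus<..G}. (sg j)\<^sup>2 * (lam j)\<^sup>2 / eps\<^sup>2 * variance_weight j)"
    by (rule sum_atLeastAtMost_split[OF m_plus_le_G])
  also have "\<dots> \<le> (\<Sum>j=1..m_plus. eps * Lm j) + (\<Sum>j\<in>{m_plus<..G}. e)"
    unfolding e_def using variance_summand_le variance_summand_above_m_plus
    by (intro add_mono sum_mono) auto
  also have "(\<Sum>j\<in>{m_plus<..G}. e) \<le> real G * e"
    using e0 by (simp add: mult_right_mono)
  also have "(\<Sum>j=1..m_plus. eps * Lm j) = eps * real m_plus * Lbar lam m_plus"
    using Lbar_eq_sum[of m_plus] by (simp add: sum_distrib_left[symmetric] mult.assoc)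
  also have "real G * e \<le> 10 * Lm 1 * exp (- real m_circ / 5 + 2 * ln (real G))"
  proof -
    have "exp (2 * ln (real G)) = exp (ln (real G)) ^ 2" by (subst exp_of_nat_mult[symmetric]) simp
    then have "exp (2 * ln (real G)) = (real G)\<^sup>2" using G0 by simp
    then have "exp (- real m_circ / 5 + 2 * ln (real G)) = (real G)\<^sup>2 * exp (- real m_circ / 5)"
      by (simp only: exp_add mult.commute)
    then show ?thesis using Lam_pos[of 1] by (simp add: e_def power2_eq_square)
  qed
  finally show ?thesis by simp
qed

end

theorem mainTheorem18:
  fixes lam th eta :: "nat \<Rightarrow> real" and tau :: "real \<Rightarrow> nat \<Rightarrow> real"
    and d C L eps_th :: real
  assumes lam_bdd: "bounded (range lam)"
    and lam_nz: "\<And>j. j \<ge> 1 \<Longrightarrow> lam j \<noteq> 0"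
    and th_l2: "summable (\<lambda>j. (th (Suc j))\<^sup>2)"
    and diff_l2: "summable (\<lambda>j. (th (Suc j) - eta (Suc j))\<^sup>2)"
    and tau_pos: "\<And>eps j. 0 < eps \<Longrightarrow> eps < 1 \<Longrightarrow> j \<ge> 1 \<Longrightarrow> tau eps j > 0"
    and A: "assumptionA lam tau d"
    and E: "assumptionE lam C L"
    and eps_th: "0 < eps_th" "eps_th < 1"
    and mcirc_le: "\<And>eps. 0 < eps \<Longrightarrow> eps < eps_th \<Longrightarrow> mcirc lam th eta eps \<le> Gdim lam eps"
  shows "\<forall>eps. 0 < eps \<and> eps < eps_th \<longrightarrow>
    (let G = Gdim lam eps; mc = mcirc lam th eta eps;
         mp = mplus lam th eta L eps; mm = mminus lam th eta C L d eps;
         Y = (\<lambda>xi. obs lam th eps xi);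
         P = (\<lambda>xi m. postM lam tau eta C eps (Y xi) m)
     in
      (\<Sum>j=1..G. (sig lam tau eps j)\<^sup>2 * (lam j)\<^sup>2 / eps\<^sup>2 *
          (\<integral>xi. ((Y xi j - lam j * th j) * (\<Sum>m=j..G. P xi m))\<^sup>2 \<partial>noise))
        \<le> eps * real mp * Lbar lam mp + 10 * Lam lam 1 * exp (- real mc / 5 + 2 * ln (real G))
      \<and>
      (\<Sum>j=1..G. (eta j - th j)\<^sup>2 *
          (\<integral>xi. (\<Sum>m\<in>{1..<j}. P xi m) + (sig lam tau eps j / tau eps j)\<^sup>2 * (\<Sum>m=j..G. P xi m) \<partial>noise))
        + (\<Sum>\<^sub>\<infinity> j\<in>{G<..}. (eta j - th j)\<^sup>2)
        \<le> bias th eta mm + (\<Sum>\<^sub>\<infinity> j\<in>{1..}. (eta j - th j)\<^sup>2) *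
             (eps * Lmax lam mm / d\<^sup>2 + 2 * exp (- real mc / 5 + ln (real G))))"
  apply (intro allI impI)
  subgoal premises eps_bounds for eps
  proof -
    interpret gaussian_sequence_model lam th eta tau d C L eps
      using assms eps_bounds by unfold_locales auto
    show ?thesis
      using variance_term_le bias_term_le
      unfolding Let_def variance_weight_def bias_weight_def post_head_def post_tail_def by simp
  qed
  done

end
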